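(* Let $F:[n]^\ell\to\mathbb R$ be permutation-invariant and $0\le i\le\ell$. Then $$\eta_i\le2^i\binom{\ell}{i}\sum_{j=0}^i\binom{i}{j}\mathbb{E}_{Y\in[n]^j}\big[\delta_Y(F)^2\big],$$ and moreover this inequality has a degree-2 sum-of-squares proof in the formal variables $(F(X))_{X\in[n]^\ell}$ from the permutation-invariance axioms $\mathcal{A}_{inv}$.
   Context: For $T\in[n]^\ell$, $\chi_T(X)=\exp(\frac{2\pi i}{n}\sum_jT_jx_j)$ on $[n]^\ell=(\mathbb Z/n\mathbb Z)^\ell$, $|T|=|\{j:T_j\ne0\}|$, $\hat F(T)=\mathbb{E}_XF(X)\overline{\chi_T(X)}$, $F_i=\sum_{|T|=i}\hat F(T)\chi_T$, and $\eta_i=\mathbb{E}_{X\in[n]^\ell}|F_i(X)|^2=\sum_{|T|=i}|\hat F(T)|^2$. $F$ is permutation-invariant if $F(x_1,\dots,x_\ell)=F(x_{\sigma(1)},\dots,x_{\sigma(\ell)})$ for all $\sigma\in S_\ell$; $\mathcal{A}_{inv}$ is the set of these equalities. For $Y\in[n]^j$, $\delta_Y(F)=\mathbb{E}_{x\in[n]^{\ell-j}}F(Y,x)$, and $\delta_\emptyset(F)=\mathbb{E}_XF(X)$. *)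

theory Defs
  imports "HOL-Analysis.Analysis" "HOL-Combinatorics.Permutations"
begin

text \<open>[n]^l = (Z/nZ)^l, represented as lists of length l with entries in {0..<n}.\<close>
definition cube :: "nat \<Rightarrow> nat \<Rightarrow> nat list set" where
  "cube n l = {xs. length xs = l \<and> set xs \<subseteq> {..<n}}"

definition chi :: "nat \<Rightarrow> nat list \<Rightarrow> nat list \<Rightarrow> complex" where
  "chi n T X = exp (2 * pi * \<i> / of_nat n * of_nat (\<Sum>j<length X. T ! j * X ! j))"

definition wt :: "nat list \<Rightarrow> nat" where
  "wt T = card {j. j < length T \<and> T ! j \<noteq> 0}"

definition fourier :: "nat \<Rightarrow> nat \<Rightarrow> (nat list \<Rightarrow> real) \<Rightarrow> nat list \<Rightarrow> complex" where
  "fourier n l F T = (\<Sum>X\<in>cube n l. of_real (F X) * cnj (chi n T X)) / of_nat (card (cube n l))"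

definition eta :: "nat \<Rightarrow> nat \<Rightarrow> (nat list \<Rightarrow> real) \<Rightarrow> nat \<Rightarrow> real" where
  "eta n l F i = (\<Sum>T\<in>{T\<in>cube n l. wt T = i}. (cmod (fourier n l F T))\<^sup>2)"

definition delta :: "nat \<Rightarrow> nat \<Rightarrow> (nat list \<Rightarrow> real) \<Rightarrow> nat list \<Rightarrow> real" where
  "delta n l F Y = (\<Sum>x\<in>cube n (l - length Y). F (Y @ x)) / real (card (cube n (l - length Y)))"

definition perm_invariant :: "nat \<Rightarrow> nat \<Rightarrow> (nat list \<Rightarrow> real) \<Rightarrow> bool" where
  "perm_invariant n l F \<longleftrightarrow>
     (\<forall>\<sigma> X. \<sigma> permutes {..<l} \<longrightarrow> X \<in> cube n l \<longrightarrow> F X = F (permute_list \<sigma> X))"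

text \<open>A degree-2 sum-of-squares proof of "P(F) >= 0" in the formal variables (F X), X in [n]^l,
  from the axioms A_inv = {F X - F (sigma X) = 0}: a polynomial identity
  P = sum of squares of degree-<=1 polynomials + sum of degree-<=1 multipliers times axioms.
  Polynomials in the variables are represented as functions of the assignment F; since they are
  real polynomials, identity for all real assignments is identity of polynomials.\<close>
definition sos2_inv :: "nat \<Rightarrow> nat \<Rightarrow> ((nat list \<Rightarrow> real) \<Rightarrow> real) \<Rightarrow> bool" where
  "sos2_inv n l P \<longleftrightarrow>
    (\<exists>(m::nat) (c0::nat \<Rightarrow> real) (c::nat \<Rightarrow> nat list \<Rightarrow> real)
        (a0::nat list \<Rightarrow> (nat \<Rightarrow> nat) \<Rightarrow> real) (a::nat list \<Rightarrow> (nat \<Rightarrow> nat) \<Rightarrow> nat list \<Rightarrow> real).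
      \<forall>F::nat list \<Rightarrow> real.
        P F = (\<Sum>k<m. (c0 k + (\<Sum>X\<in>cube n l. c k X * F X))\<^sup>2)
            + (\<Sum>X\<in>cube n l. \<Sum>\<sigma>\<in>{\<sigma>. \<sigma> permutes {..<l}}.
                 (a0 X \<sigma> + (\<Sum>Y\<in>cube n l. a X \<sigma> Y * F Y)) * (F X - F (permute_list \<sigma> X))))"

definition rhsC7 :: "nat \<Rightarrow> nat \<Rightarrow> (nat list \<Rightarrow> real) \<Rightarrow> nat \<Rightarrow> real" where
  "rhsC7 n l F i = 2 ^ i * real (l choose i) *
     (\<Sum>j=0..i. real (i choose j) *
        ((\<Sum>Y\<in>cube n j. (delta n l F Y)\<^sup>2) / real (card (cube n j))))"

end

theory Submission
  imports Defs
begin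

text \<open>For a set S of i coordinates, the characters \<open>\<chi>\<^sub>T\<close> with support exactly S depend only on
  the coordinates in S, so by Bessel's inequality their total Fourier weight is at most the mean square
  of the conditional expectation \<open>E[F | x\<^sub>S]\<close>. A permutation moving S onto the first i
  coordinates turns this mean square, modulo the invariance axioms, into \<open>E\<^sub>Y \<delta>\<^sub>Y(F)\<^sup>2\<close>.
  Summing over the \<open>l choose i\<close> supports gives \<open>\<eta>\<^sub>i \<le> (l choose i) E\<^sub>Y \<delta>\<^sub>Y(F)\<^sup>2\<close>, the
  term j = i of the right-hand side; all other terms are nonnegative.
  Each step is an identity between quadratic polynomials in the values F X: the Bessel gap is a sum of
  squares of residuals, and the symmetrisation error is \<open>b\<^sup>2 - a\<^sup>2 = (a + b)(b - a)\<close> with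
  \<open>b - a\<close> a linear combination of invariance axioms.\<close>

lemma length_of_cube: "X \<in> cube n l \<Longrightarrow> length X = l"
  by (simp add: cube_def)

lemma cube_eq_lists: "cube n l = {xs. set xs \<subseteq> {..<n} \<and> length xs = l}"
  unfolding cube_def by auto

lemma finite_cube [simp]: "finite (cube n l)"
  by (simp add: cube_eq_lists finite_lists_length_eq)

lemma card_cube: "card (cube n l) = n ^ l"
  by (simp add: cube_eq_lists card_lists_length_eq)

lemma cube_0 [simp]: "cube n 0 = {[]}"
  unfolding cube_def by auto

lemma Cons_in_cube_Suc_iff: "T \<in> cube n (Suc l) \<longleftrightarrow> (\<exists>t T'. T = t # T' \<and> t < n \<and> T' \<in> cube n l)"
  unfolding cube_def by (cases T) auto

lemma sum_cube_Suc:
  "(\<Sum>X\<in>cube n (Suc l). f X) = (\<Sum>x<n. \<Sum>X\<in>cube n l. f (x # X))"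
proof -
  have "(\<Sum>X\<in>cube n (Suc l). f X) = (\<Sum>(x, X)\<in>{..<n} \<times> cube n l. f (x # X))"
    by (rule sum.reindex_bij_witness[where i="\<lambda>(x, X). x # X" and j="\<lambda>X. (hd X, tl X)"])
       (auto simp: cube_def length_Suc_conv)
  then show ?thesis by (simp add: sum.cartesian_product)
qed

lemma sum_cube_add:
  "(\<Sum>W\<in>cube n (a + b). f W) = (\<Sum>Y\<in>cube n a. \<Sum>Z\<in>cube n b. f (Y @ Z))"
proof -
  have "(\<Sum>W\<in>cube n (a + b). f W) = (\<Sum>(Y, Z)\<in>cube n a \<times> cube n b. f (Y @ Z))"
    by (rule sum.reindex_bij_witness[where i="\<lambda>(Y, Z). Y @ Z" and j="\<lambda>W. (take a W, drop a W)"])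
       (auto simp: cube_def dest: in_set_takeD in_set_dropD)
  then show ?thesis by (simp add: sum.cartesian_product)
qed

lemma sum_cube_take:
  assumes "i \<le> l"
  shows "(\<Sum>X\<in>cube n l. f (take i X)) = real (n ^ (l - i)) * (\<Sum>Y\<in>cube n i. f Y)"
proof -
  have "(\<Sum>X\<in>cube n l. f (take i X)) = (\<Sum>Y\<in>cube n i. \<Sum>Z\<in>cube n (l - i). f (take i (Y @ Z)))"
    using sum_cube_add[where a=i and b="l - i" and f="\<lambda>X. f (take i X)"] assms by simp
  also have "\<dots> = (\<Sum>Y\<in>cube n i. real (n ^ (l - i)) * f Y)"
    by (intro sum.cong refl) (simp add: length_of_cube card_cube)
  finally show ?thesis by (simp add: sum_distrib_left)
qed

lemma permute_list_in_cube: "\<sigma> permutes {..<l} \<Longrightarrow> X \<in> cube n l \<Longrightarrow> permute_list \<sigma> X \<in> cube n l"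
  unfolding cube_def by auto

lemma sum_cube_permute_list:
  assumes \<sigma>: "\<sigma> permutes {..<l}"
  shows "(\<Sum>X\<in>cube n l. f (permute_list \<sigma> X)) = (\<Sum>X\<in>cube n l. f X)"
proof -
  have inv: "inv \<sigma> permutes {..<l}" using \<sigma> by (rule permutes_inv)
  have cancel: "permute_list \<tau> (permute_list \<rho> X) = X"
    if "\<rho> permutes {..<l}" "\<tau> permutes {..<l}" "\<rho> \<circ> \<tau> = id" "X \<in> cube n l" for \<rho> \<tau> X
    using that by (simp add: permute_list_compose[symmetric] length_of_cube)
  show ?thesis
    by (rule sum.reindex_bij_witness[where i="permute_list (inv \<sigma>)" and j="permute_list \<sigma>"])
       (use \<sigma> inv in \<open>auto simp: cancel permutes_inv_o permute_list_in_cube\<close>)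
qed

section \<open>Degree-2 certificates\<close>

definition affine_form :: "nat \<Rightarrow> nat \<Rightarrow> ((nat list \<Rightarrow> real) \<Rightarrow> real) \<Rightarrow> bool" where
  "affine_form n l f \<longleftrightarrow> (\<exists>c0 c. \<forall>G. f G = c0 + (\<Sum>X\<in>cube n l. c X * G X))"

lemma affine_form_const: "affine_form n l (\<lambda>G. a)"
  unfolding affine_form_def by (intro exI[of _ a] exI[of _ "\<lambda>_. 0"]) simp

lemma affine_form_var:
  assumes "X \<in> cube n l"
  shows "affine_form n l (\<lambda>G. G X)"
  unfolding affine_form_def
proof (intro exI allI)
  fix G :: "nat list \<Rightarrow> real"
  have "(\<Sum>Y\<in>cube n l. of_bool (Y = X) * G Y) = (\<Sum>Y\<in>cube n l. if Y = X then G X else 0)"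
    by (rule sum.cong) auto
  also have "\<dots> = G X" using assms by simp
  finally show "G X = 0 + (\<Sum>Y\<in>cube n l. of_bool (Y = X) * G Y)" by simp
qed

lemma affine_form_add:
  assumes "affine_form n l f" "affine_form n l g"
  shows "affine_form n l (\<lambda>G. f G + g G)"
proof -
  from assms obtain a0 a b0 b where
    "\<forall>G. f G = a0 + (\<Sum>X\<in>cube n l. a X * G X)" "\<forall>G. g G = b0 + (\<Sum>X\<in>cube n l. b X * G X)"
    unfolding affine_form_def by blast
  then show ?thesis unfolding affine_form_def
    by (intro exI[of _ "a0 + b0"] exI[of _ "\<lambda>X. a X + b X"]) (simp add: distrib_right sum.distrib)
qed

lemma affine_form_mult:
  assumes "affine_form n l f"
  shows "affine_form n l (\<lambda>G. r * f G)"
proof -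
  from assms obtain a0 a where "\<forall>G. f G = a0 + (\<Sum>X\<in>cube n l. a X * G X)"
    unfolding affine_form_def by blast
  then show ?thesis unfolding affine_form_def
    by (intro exI[of _ "r * a0"] exI[of _ "\<lambda>X. r * a X"])
       (simp add: distrib_left sum_distrib_left mult.assoc)
qed

lemma affine_form_divide: "affine_form n l f \<Longrightarrow> affine_form n l (\<lambda>G. f G / r)"
  using affine_form_mult[of n l f "1 / r"] by simp

lemma affine_form_uminus: "affine_form n l f \<Longrightarrow> affine_form n l (\<lambda>G. - f G)"
  using affine_form_mult[of n l f "- 1"] by simp

lemma affine_form_diff:
  "affine_form n l f \<Longrightarrow> affine_form n l g \<Longrightarrow> affine_form n l (\<lambda>G. f G - g G)"
  using affine_form_add[OF _ affine_form_uminus, of n l f g] by simp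

lemma affine_form_sum:
  "finite A \<Longrightarrow> (\<And>a. a \<in> A \<Longrightarrow> affine_form n l (f a)) \<Longrightarrow> affine_form n l (\<lambda>G. \<Sum>a\<in>A. f a G)"
  by (induction A rule: finite_induct) (auto intro: affine_form_const affine_form_add)

definition sum_squares_part ::
    "nat \<Rightarrow> nat \<Rightarrow> nat \<Rightarrow> (nat \<Rightarrow> real) \<Rightarrow> (nat \<Rightarrow> nat list \<Rightarrow> real) \<Rightarrow> (nat list \<Rightarrow> real) \<Rightarrow> real" where
  "sum_squares_part n l m c0 c G = (\<Sum>k<m. (c0 k + (\<Sum>X\<in>cube n l. c k X * G X))\<^sup>2)"

definition inv_ideal_part ::
    "nat \<Rightarrow> nat \<Rightarrow> (nat list \<Rightarrow> (nat \<Rightarrow> nat) \<Rightarrow> real) \<Rightarrow> (nat list \<Rightarrow> (nat \<Rightarrow> nat) \<Rightarrow> nat list \<Rightarrow> real)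
       \<Rightarrow> (nat list \<Rightarrow> real) \<Rightarrow> real" where
  "inv_ideal_part n l a0 a G = (\<Sum>X\<in>cube n l. \<Sum>\<sigma>\<in>{\<sigma>. \<sigma> permutes {..<l}}.
      (a0 X \<sigma> + (\<Sum>Y\<in>cube n l. a X \<sigma> Y * G Y)) * (G X - G (permute_list \<sigma> X)))"

lemma sos2_inv_iff:
  "sos2_inv n l P \<longleftrightarrow>
     (\<exists>m c0 c a0 a. P = (\<lambda>G. sum_squares_part n l m c0 c G + inv_ideal_part n l a0 a G))"
  unfolding sos2_inv_def sum_squares_part_def inv_ideal_part_def by (simp add: fun_eq_iff)

lemma sos2_inv_cong: "sos2_inv n l Q \<Longrightarrow> (\<And>G. P G = Q G) \<Longrightarrow> sos2_inv n l P"
  by (metis ext)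

lemma sos2_inv_nonneg:
  assumes "sos2_inv n l P" "perm_invariant n l F"
  shows "P F \<ge> 0"
proof -
  from assms(1) obtain m c0 c a0 a
    where P: "P = (\<lambda>G. sum_squares_part n l m c0 c G + inv_ideal_part n l a0 a G)"
    unfolding sos2_inv_iff by blast
  have "inv_ideal_part n l a0 a F = 0"
    using assms(2) unfolding perm_invariant_def inv_ideal_part_def by (intro sum.neutral ballI) auto
  then show ?thesis by (simp add: P sum_squares_part_def sum_nonneg)
qed

lemma sos2_inv_zero: "sos2_inv n l (\<lambda>G. 0)"
  unfolding sos2_inv_iff sum_squares_part_def inv_ideal_part_def
  by (intro exI[of _ 0] exI[of _ "\<lambda>_. 0"] exI[of _ "\<lambda>_ _. 0"] exI[of _ "\<lambda>_ _. 0"]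
        exI[of _ "\<lambda>_ _ _. 0"]) (simp add: fun_eq_iff)

lemma sos2_inv_add:
  assumes "sos2_inv n l P" "sos2_inv n l Q"
  shows "sos2_inv n l (\<lambda>G. P G + Q G)"
proof -
  from assms obtain m1 c01 c1 a01 a1 m2 c02 c2 a02 a2 where
    P: "P = (\<lambda>G. sum_squares_part n l m1 c01 c1 G + inv_ideal_part n l a01 a1 G)" and
    Q: "Q = (\<lambda>G. sum_squares_part n l m2 c02 c2 G + inv_ideal_part n l a02 a2 G)"
    unfolding sos2_inv_iff by blast
  define c0 where "c0 k = (if k < m1 then c01 k else c02 (k - m1))" for k
  define c where "c k = (if k < m1 then c1 k else c2 (k - m1))" for k
  have split: "(\<Sum>k<m1 + m2. g k) = (\<Sum>k<m1. g k) + (\<Sum>k<m2. g (m1 + k))" for g :: "nat \<Rightarrow> real"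
    by (induction m2) (simp_all add: add.assoc)
  have "sum_squares_part n l (m1 + m2) c0 c G
      = sum_squares_part n l m1 c01 c1 G + sum_squares_part n l m2 c02 c2 G" for G
    unfolding sum_squares_part_def split by (simp add: c0_def c_def)
  moreover have "inv_ideal_part n l (\<lambda>X \<sigma>. a01 X \<sigma> + a02 X \<sigma>) (\<lambda>X \<sigma> Y. a1 X \<sigma> Y + a2 X \<sigma> Y) G
      = inv_ideal_part n l a01 a1 G + inv_ideal_part n l a02 a2 G" for G
    unfolding inv_ideal_part_def by (simp add: distrib_right sum.distrib)
  ultimately show ?thesis
    unfolding sos2_inv_iff P Q
    by (intro exI[of _ "m1 + m2"] exI[of _ c0] exI[of _ c] exI[of _ "\<lambda>X \<sigma>. a01 X \<sigma> + a02 X \<sigma>"]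
        exI[of _ "\<lambda>X \<sigma> Y. a1 X \<sigma> Y + a2 X \<sigma> Y"]) (simp add: fun_eq_iff)
qed

lemma sos2_inv_sum:
  "finite A \<Longrightarrow> (\<And>a. a \<in> A \<Longrightarrow> sos2_inv n l (P a)) \<Longrightarrow> sos2_inv n l (\<lambda>G. \<Sum>a\<in>A. P a G)"
  by (induction A rule: finite_induct) (auto intro: sos2_inv_zero sos2_inv_add)

lemma sos2_inv_mult:
  assumes "sos2_inv n l P" "r \<ge> 0"
  shows "sos2_inv n l (\<lambda>G. r * P G)"
proof -
  from assms(1) obtain m c0 c a0 a where
    P: "P = (\<lambda>G. sum_squares_part n l m c0 c G + inv_ideal_part n l a0 a G)"
    unfolding sos2_inv_iff by blast
  have factor: "s * x + (\<Sum>Y\<in>A. s * h Y) = s * (x + sum h A)" for s x and h :: "nat list \<Rightarrow> real" and A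
    by (simp add: distrib_left sum_distrib_left)
  have "sum_squares_part n l m (\<lambda>k. sqrt r * c0 k) (\<lambda>k X. sqrt r * c k X) G
      = r * sum_squares_part n l m c0 c G" for G
    unfolding sum_squares_part_def using assms(2)
    by (simp add: mult.assoc factor power_mult_distrib sum_distrib_left)
  moreover have "inv_ideal_part n l (\<lambda>X \<sigma>. r * a0 X \<sigma>) (\<lambda>X \<sigma> Y. r * a X \<sigma> Y) G
      = r * inv_ideal_part n l a0 a G" for G
    unfolding inv_ideal_part_def by (simp add: mult.assoc factor sum_distrib_left)
  ultimately show ?thesis
    unfolding sos2_inv_iff P
    by (intro exI[of _ m] exI[of _ "\<lambda>k. sqrt r * c0 k"] exI[of _ "\<lambda>k X. sqrt r * c k X"]
        exI[of _ "\<lambda>X \<sigma>. r * a0 X \<sigma>"] exI[of _ "\<lambda>X \<sigma> Y. r * a X \<sigma> Y"]) (simp add: fun_eq_iff distrib_left)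
qed

lemma sos2_inv_square:
  assumes "affine_form n l f"
  shows "sos2_inv n l (\<lambda>G. (f G)\<^sup>2)"
proof -
  from assms obtain c0 c where f: "\<forall>G. f G = c0 + (\<Sum>X\<in>cube n l. c X * G X)"
    unfolding affine_form_def by blast
  show ?thesis
    unfolding sos2_inv_iff sum_squares_part_def inv_ideal_part_def
    by (intro exI[of _ 1] exI[of _ "\<lambda>_. c0"] exI[of _ "\<lambda>_. c"] exI[of _ "\<lambda>_ _. 0"]
          exI[of _ "\<lambda>_ _ _. 0"]) (simp add: f fun_eq_iff)
qed

lemma sos2_inv_axiom_multiple:
  assumes "affine_form n l f" "X \<in> cube n l" "\<sigma> permutes {..<l}"
  shows "sos2_inv n l (\<lambda>G. f G * (G X - G (permute_list \<sigma> X)))"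
proof -
  from assms obtain c0 c where f: "\<forall>G. f G = c0 + (\<Sum>X\<in>cube n l. c X * G X)"
    unfolding affine_form_def by blast
  define a0 where "a0 X' \<sigma>' = (if X' = X \<and> \<sigma>' = \<sigma> then c0 else 0)" for X' and \<sigma>' :: "nat \<Rightarrow> nat"
  define a where "a X' \<sigma>' Y = (if X' = X \<and> \<sigma>' = \<sigma> then c Y else 0)" for X' and \<sigma>' :: "nat \<Rightarrow> nat" and Y
  have "finite {\<sigma>. \<sigma> permutes {..<l}}" by (rule finite_permutations) simp
  have "inv_ideal_part n l a0 a G = f G * (G X - G (permute_list \<sigma> X))" for G
  proof -
    have "inv_ideal_part n l a0 a G = (\<Sum>X'\<in>cube n l. if X' = X then (\<Sum>\<sigma>'\<in>{\<sigma>. \<sigma> permutes {..<l}}.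
          if \<sigma>' = \<sigma> then f G * (G X - G (permute_list \<sigma> X)) else 0) else 0)"
      unfolding inv_ideal_part_def by (intro sum.cong refl) (auto simp: a0_def a_def f intro!: sum.cong)
    then show ?thesis using \<open>finite _\<close> assms(2,3) by simp
  qed
  then show ?thesis
    unfolding sos2_inv_iff sum_squares_part_def
    by (intro exI[of _ 0] exI[of _ "\<lambda>_. 0"] exI[of _ "\<lambda>_ _. 0"] exI[of _ a0] exI[of _ a])
       (simp add: fun_eq_iff)
qed

section \<open>Characters and Bessel's identity\<close>

lemma sum_character_1d:
  assumes n: "n \<ge> 1" and "t < n" "t' < n"
  shows "(\<Sum>x<n. exp (2 * pi * \<i> / of_nat n * of_nat (t * x)) *
                 cnj (exp (2 * pi * \<i> / of_nat n * of_nat (t' * x))))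
         = (if t = t' then of_nat n else 0)"
proof -
  define u where "u m = exp (2 * of_real pi * \<i> * of_nat m / of_nat n)" for m :: nat
  have power: "exp (2 * pi * \<i> / of_nat n * of_nat (m * x)) = u m ^ x" for m x
    unfolding u_def exp_of_nat_mult[symmetric] by (simp add: field_simps)
  have cnj_u: "cnj (u m) = inverse (u m)" for m
    unfolding u_def by (simp add: exp_cnj exp_minus[symmetric])
  define z where "z = u t / u t'"
  have "z ^ n = 1"
    using complex_root_unity[of n] n by (simp add: z_def u_def power_divide)
  moreover have "z = 1 \<longleftrightarrow> t = t'"
    using complex_root_unity_eq[OF n, of t t'] assms by (simp add: z_def u_def)
  moreover have "exp (2 * pi * \<i> / of_nat n * of_nat (t * x)) *
      cnj (exp (2 * pi * \<i> / of_nat n * of_nat (t' * x))) = z ^ x" for x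
    by (simp only: power) (simp add: cnj_u z_def divide_inverse power_mult_distrib power_inverse)
  ultimately show ?thesis by (simp add: sum_gp_strict)
qed

lemma chi_Cons:
  "chi n (t # T) (x # X) = exp (2 * pi * \<i> / of_nat n * of_nat (t * x)) * chi n T X"
proof -
  have "(\<Sum>j<Suc (length X). (t # T) ! j * (x # X) ! j) = t * x + (\<Sum>j<length X. T ! j * X ! j)"
    by (subst sum.lessThan_Suc_shift) simp
  then show ?thesis
    unfolding chi_def by (simp only: length_Cons of_nat_add distrib_left exp_add)
qed

lemma chi_orthogonal:
  assumes n: "n \<ge> 1"
  shows "T \<in> cube n l \<Longrightarrow> T' \<in> cube n l \<Longrightarrow>
    (\<Sum>X\<in>cube n l. chi n T X * cnj (chi n T' X)) = (if T = T' then of_nat (n ^ l) else 0)"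
proof (induction l arbitrary: T T')
  case 0
  then show ?case by (simp add: chi_def)
next
  case (Suc l)
  then obtain t T1 t' T1' where T: "T = t # T1" "t < n" "T1 \<in> cube n l"
    and T': "T' = t' # T1'" "t' < n" "T1' \<in> cube n l"
    unfolding Cons_in_cube_Suc_iff by blast
  define e where "e x = exp (2 * pi * \<i> / of_nat n * of_nat (t * x)) *
                        cnj (exp (2 * pi * \<i> / of_nat n * of_nat (t' * x)))" for x
  have "(\<Sum>X\<in>cube n (Suc l). chi n T X * cnj (chi n T' X))
      = (\<Sum>x<n. \<Sum>X\<in>cube n l. e x * (chi n T1 X * cnj (chi n T1' X)))"
    unfolding sum_cube_Suc T T' chi_Cons e_def by (simp add: algebra_simps)
  also have "\<dots> = (\<Sum>x<n. e x * (\<Sum>X\<in>cube n l. chi n T1 X * cnj (chi n T1' X)))"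
    by (simp add: sum_distrib_left)
  also have "\<dots> = (\<Sum>x<n. e x) * (if T1 = T1' then of_nat (n ^ l) else 0)"
    by (simp add: Suc.IH[OF T(3) T'(3)] sum_distrib_right)
  also have "\<dots> = (if T = T' then of_nat (n ^ Suc l) else 0)"
    unfolding e_def sum_character_1d[OF n T(2) T'(2)] by (simp add: T T')
  finally show ?case .
qed

lemma bessel_identity:
  fixes a :: "'x \<Rightarrow> complex" and e :: "'t \<Rightarrow> 'x \<Rightarrow> complex" and N :: real
  assumes "finite D" "finite M" "N \<noteq> 0"
    and orth: "\<And>T T'. T \<in> M \<Longrightarrow> T' \<in> M \<Longrightarrow>
       (\<Sum>x\<in>D. e T x * cnj (e T' x)) = (if T = T' then of_real N else 0)"
  defines "c T \<equiv> (\<Sum>x\<in>D. a x * cnj (e T x)) / of_real N"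
  shows "(\<Sum>x\<in>D. (cmod (a x - (\<Sum>T\<in>M. c T * e T x)))\<^sup>2)
       = (\<Sum>x\<in>D. (cmod (a x))\<^sup>2) - N * (\<Sum>T\<in>M. (cmod (c T))\<^sup>2)"
proof -
  define b where "b x = (\<Sum>T\<in>M. c T * e T x)" for x
  define C where "C = of_real N * (\<Sum>T\<in>M. c T * cnj (c T))"
  have coeff: "(\<Sum>x\<in>D. a x * cnj (e T x)) = of_real N * c T" for T
    using assms(3) by (simp add: c_def)
  have ab: "(\<Sum>x\<in>D. a x * cnj (b x)) = C"
  proof -
    have "(\<Sum>x\<in>D. a x * cnj (b x)) = (\<Sum>T\<in>M. cnj (c T) * (\<Sum>x\<in>D. a x * cnj (e T x)))"
      unfolding b_def by (simp add: sum_distrib_left algebra_simps sum.swap[of _ D])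
    also have "\<dots> = C"
      by (simp only: coeff) (simp add: C_def sum_distrib_left algebra_simps)
    finally show ?thesis .
  qed
  have bb: "(\<Sum>x\<in>D. b x * cnj (b x)) = C"
  proof -
    have "(\<Sum>x\<in>D. b x * cnj (b x))
        = (\<Sum>T\<in>M. \<Sum>T'\<in>M. c T * cnj (c T') * (\<Sum>x\<in>D. e T x * cnj (e T' x)))"
      unfolding b_def
      by (simp add: sum_distrib_left sum_distrib_right algebra_simps sum.swap[of _ D])
         (rule sum.cong[OF refl], rule sum.swap)
    also have "\<dots> = (\<Sum>T\<in>M. \<Sum>T'\<in>M. if T' = T then c T * cnj (c T) * of_real N else 0)"
      by (intro sum.cong refl) (auto simp: orth)
    also have "\<dots> = C"
      using assms(2) by (simp add: C_def sum_distrib_left mult.commute)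
    finally show ?thesis .
  qed
  have "of_real (\<Sum>x\<in>D. (cmod (a x - b x))\<^sup>2) = (\<Sum>x\<in>D. (a x - b x) * cnj (a x - b x))"
    by (simp only: of_real_sum complex_norm_square)
  also have "\<dots> = (\<Sum>x\<in>D. a x * cnj (a x)) - (\<Sum>x\<in>D. a x * cnj (b x))
      - cnj (\<Sum>x\<in>D. a x * cnj (b x)) + (\<Sum>x\<in>D. b x * cnj (b x))"
    by (simp add: sum_subtractf sum.distrib algebra_simps)
  also have "\<dots> = (\<Sum>x\<in>D. a x * cnj (a x)) - cnj C"
    by (simp add: ab bb)
  also have "\<dots> = of_real ((\<Sum>x\<in>D. (cmod (a x))\<^sup>2) - N * (\<Sum>T\<in>M. (cmod (c T))\<^sup>2))"
    unfolding C_def of_real_diff of_real_mult of_real_sum complex_norm_square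
    by (simp add: mult.commute)
  finally show ?thesis unfolding b_def by (simp only: of_real_eq_iff)
qed

section \<open>Conditional expectations\<close>

definition nonzero_indices :: "nat list \<Rightarrow> nat set" where
  "nonzero_indices T = {j. j < length T \<and> T ! j \<noteq> 0}"

definition merge_on :: "nat set \<Rightarrow> nat list \<Rightarrow> nat list \<Rightarrow> nat list" where
  "merge_on S X Z = map (\<lambda>k. if k \<in> S then X ! k else Z ! k) [0..<length X]"

definition cond_exp :: "nat \<Rightarrow> nat \<Rightarrow> nat set \<Rightarrow> (nat list \<Rightarrow> real) \<Rightarrow> nat list \<Rightarrow> real" where
  "cond_exp n l S G X = (\<Sum>Z\<in>cube n l. G (merge_on S X Z)) / real (n ^ l)"

lemma length_merge_on [simp]: "length (merge_on S X Z) = length X"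
  by (simp add: merge_on_def)

lemma nth_merge_on: "k < length X \<Longrightarrow> merge_on S X Z ! k = (if k \<in> S then X ! k else Z ! k)"
  by (simp add: merge_on_def)

lemma merge_on_in_cube: "X \<in> cube n l \<Longrightarrow> Z \<in> cube n l \<Longrightarrow> merge_on S X Z \<in> cube n l"
  unfolding cube_def merge_on_def by (auto simp: nth_mem subset_iff)

lemma merge_on_merge_on:
  "length Z = length X \<Longrightarrow> merge_on S (merge_on S X Z) (merge_on S Z X) = X"
  by (rule nth_equalityI) (auto simp: nth_merge_on)

lemma sum_cube_merge_on:
  fixes g :: "nat list \<Rightarrow> 'a::comm_semiring_1"
  shows "(\<Sum>X\<in>cube n l. \<Sum>Z\<in>cube n l. g (merge_on S X Z)) = of_nat (n ^ l) * (\<Sum>W\<in>cube n l. g W)"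
proof -
  have "(\<Sum>X\<in>cube n l. \<Sum>Z\<in>cube n l. g (merge_on S X Z))
      = (\<Sum>(X, Z)\<in>cube n l \<times> cube n l. g (merge_on S X Z))"
    by (simp add: sum.cartesian_product)
  also have "\<dots> = (\<Sum>(W, V)\<in>cube n l \<times> cube n l. g W)"
    \<comment> \<open>\<open>(X, Z) \<mapsto> (merge_on S X Z, merge_on S Z X)\<close> is an involution of the square\<close>
    by (rule sum.reindex_bij_witness[where i="\<lambda>(X, Z). (merge_on S X Z, merge_on S Z X)"
          and j="\<lambda>(X, Z). (merge_on S X Z, merge_on S Z X)"])
       (auto simp: merge_on_in_cube merge_on_merge_on length_of_cube)
  also have "\<dots> = of_nat (n ^ l) * (\<Sum>W\<in>cube n l. g W)"
    unfolding sum.cartesian_product[symmetric] by (simp add: card_cube sum_distrib_left mult.commute)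
  finally show ?thesis .
qed

lemma chi_merge_on:
  assumes "nonzero_indices T \<subseteq> S" "length T = length X"
  shows "chi n T (merge_on S X Z) = chi n T X"
proof -
  have "(\<Sum>j<length X. T ! j * merge_on S X Z ! j) = (\<Sum>j<length X. T ! j * X ! j)"
    using assms by (intro sum.cong refl) (auto simp: nth_merge_on nonzero_indices_def)
  then show ?thesis by (simp add: chi_def)
qed

lemma sum_cond_exp_mult_cnj_chi:
  assumes n: "n \<ge> 1" and T: "T \<in> cube n l" "nonzero_indices T \<subseteq> S"
  shows "(\<Sum>X\<in>cube n l. of_real (cond_exp n l S G X) * cnj (chi n T X))
       = of_nat (n ^ l) * fourier n l G T"
proof -
  have "(\<Sum>X\<in>cube n l. of_real (cond_exp n l S G X) * cnj (chi n T X))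
      = (\<Sum>X\<in>cube n l. \<Sum>Z\<in>cube n l. of_real (G (merge_on S X Z)) * cnj (chi n T (merge_on S X Z)))
        / of_nat (n ^ l)"
    unfolding cond_exp_def using T
    by (simp add: sum_divide_distrib sum_distrib_right chi_merge_on length_of_cube)
  also have "\<dots> = of_nat (n ^ l) * fourier n l G T"
    unfolding sum_cube_merge_on[of "\<lambda>W. of_real (G W) * cnj (chi n T W)"] fourier_def card_cube
    using n by simp
  finally show ?thesis .
qed

definition complex_affine_form :: "nat \<Rightarrow> nat \<Rightarrow> ((nat list \<Rightarrow> real) \<Rightarrow> complex) \<Rightarrow> bool" where
  "complex_affine_form n l f \<longleftrightarrow> affine_form n l (\<lambda>G. Re (f G)) \<and> affine_form n l (\<lambda>G. Im (f G))"

lemma complex_affine_form_of_real: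
  "affine_form n l f \<Longrightarrow> complex_affine_form n l (\<lambda>G. of_real (f G))"
  unfolding complex_affine_form_def by (simp add: affine_form_const)

lemma complex_affine_form_diff:
  "complex_affine_form n l f \<Longrightarrow> complex_affine_form n l g \<Longrightarrow> complex_affine_form n l (\<lambda>G. f G - g G)"
  unfolding complex_affine_form_def by (auto intro: affine_form_diff)

lemma complex_affine_form_mult:
  "complex_affine_form n l f \<Longrightarrow> complex_affine_form n l (\<lambda>G. f G * c)"
  unfolding complex_affine_form_def
  by (auto intro!: affine_form_diff affine_form_add affine_form_mult simp: mult.commute[of _ "Re c"] mult.commute[of _ "Im c"])

lemma complex_affine_form_divide:
  "complex_affine_form n l f \<Longrightarrow> complex_affine_form n l (\<lambda>G. f G / c)"
  using complex_affine_form_mult[of n l f "inverse c"] by (simp add: divide_inverse)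

lemma complex_affine_form_sum:
  "finite A \<Longrightarrow> (\<And>a. a \<in> A \<Longrightarrow> complex_affine_form n l (f a))
    \<Longrightarrow> complex_affine_form n l (\<lambda>G. \<Sum>a\<in>A. f a G)"
  unfolding complex_affine_form_def by (auto intro!: affine_form_sum)

lemma affine_form_cond_exp: "X \<in> cube n l \<Longrightarrow> affine_form n l (\<lambda>G. cond_exp n l S G X)"
  unfolding cond_exp_def
  by (intro affine_form_divide affine_form_sum) (auto intro: affine_form_var merge_on_in_cube)

lemma complex_affine_form_fourier: "complex_affine_form n l (\<lambda>G. fourier n l G T)"
  unfolding fourier_def
  by (intro complex_affine_form_divide complex_affine_form_sum complex_affine_form_mult
        complex_affine_form_of_real affine_form_var) auto

lemma sos2_inv_bessel_gap:
  assumes n: "n \<ge> 1" and M: "finite M" "\<And>T. T \<in> M \<Longrightarrow> T \<in> cube n l \<and> nonzero_indices T \<subseteq> S"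
  shows "sos2_inv n l (\<lambda>G. (\<Sum>X\<in>cube n l. (cond_exp n l S G X)\<^sup>2) / real (n ^ l)
                              - (\<Sum>T\<in>M. (cmod (fourier n l G T))\<^sup>2))"
proof -
  define N where "N = real (n ^ l)"
  define z where "z X G = of_real (cond_exp n l S G X) - (\<Sum>T\<in>M. fourier n l G T * chi n T X)" for X G
  have "N \<noteq> 0" using n by (simp add: N_def)
  have gap: "(\<Sum>X\<in>cube n l. (cond_exp n l S G X)\<^sup>2) / N - (\<Sum>T\<in>M. (cmod (fourier n l G T))\<^sup>2)
      = (1 / N) * (\<Sum>X\<in>cube n l. (Re (z X G))\<^sup>2 + (Im (z X G))\<^sup>2)" for G
  proof -
    have coeff: "(\<Sum>X\<in>cube n l. of_real (cond_exp n l S G X) * cnj (chi n T X)) / of_real N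
        = fourier n l G T" if "T \<in> M" for T
      using M(2)[OF that] n \<open>N \<noteq> 0\<close> by (simp add: sum_cond_exp_mult_cnj_chi N_def)
    have orth: "(\<Sum>X\<in>cube n l. chi n T X * cnj (chi n T' X)) = (if T = T' then of_real N else 0)"
      if "T \<in> M" "T' \<in> M" for T T'
      using chi_orthogonal[OF n] M(2) that by (simp add: N_def)
    have "(\<Sum>X\<in>cube n l. (cmod (z X G))\<^sup>2)
        = (\<Sum>X\<in>cube n l. (cond_exp n l S G X)\<^sup>2) - N * (\<Sum>T\<in>M. (cmod (fourier n l G T))\<^sup>2)"
      using bessel_identity[OF finite_cube M(1) \<open>N \<noteq> 0\<close> orth, of "\<lambda>X. of_real (cond_exp n l S G X)"]
      by (simp add: z_def coeff cong: sum.cong)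
    then show ?thesis
      using \<open>N \<noteq> 0\<close> by (simp add: cmod_power2 field_simps)
  qed
  have "complex_affine_form n l (z X)" if "X \<in> cube n l" for X
    unfolding z_def using that M(1)
    by (intro complex_affine_form_diff complex_affine_form_of_real affine_form_cond_exp
          complex_affine_form_sum complex_affine_form_mult complex_affine_form_fourier)
  then show ?thesis
    unfolding N_def[symmetric] gap complex_affine_form_def
    by (intro sos2_inv_mult sos2_inv_sum sos2_inv_add sos2_inv_square) (auto simp: N_def)
qed

section \<open>Symmetrisation\<close>

lemma merge_on_prefix:
  assumes "length Z = length X" "i \<le> length X"
  shows "merge_on {..<i} X Z = take i X @ drop i Z"
  using assms by (intro nth_equalityI) (auto simp: nth_merge_on nth_append)

lemma permute_list_merge_on:
  assumes \<sigma>: "\<sigma> permutes {..<length X}" and "length Z = length X"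
    and S: "\<And>k. k < length X \<Longrightarrow> \<sigma> k \<in> S \<longleftrightarrow> k \<in> S'"
  shows "permute_list \<sigma> (merge_on S X Z) = merge_on S' (permute_list \<sigma> X) (permute_list \<sigma> Z)"
proof (rule nth_equalityI)
  fix k assume "k < length (permute_list \<sigma> (merge_on S X Z))"
  then have "k < length X" "\<sigma> k < length X"
    using permutes_in_image[OF \<sigma>] by auto
  then show "permute_list \<sigma> (merge_on S X Z) ! k = merge_on S' (permute_list \<sigma> X) (permute_list \<sigma> Z) ! k"
    using assms by (simp add: permute_list_nth nth_merge_on)
qed (simp add: assms)

lemma cond_exp_permute_list:
  assumes \<sigma>: "\<sigma> permutes {..<l}" and X: "X \<in> cube n l"
    and S: "\<And>k. k < l \<Longrightarrow> \<sigma> k \<in> S \<longleftrightarrow> k \<in> S'"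
  shows "cond_exp n l S (\<lambda>W. G (permute_list \<sigma> W)) X = cond_exp n l S' G (permute_list \<sigma> X)"
proof -
  have "(\<Sum>Z\<in>cube n l. G (permute_list \<sigma> (merge_on S X Z)))
      = (\<Sum>Z\<in>cube n l. G (merge_on S' (permute_list \<sigma> X) (permute_list \<sigma> Z)))"
    using assms by (intro sum.cong refl arg_cong[where f=G] permute_list_merge_on) (auto simp: length_of_cube)
  also have "\<dots> = (\<Sum>Z\<in>cube n l. G (merge_on S' (permute_list \<sigma> X) Z))"
    by (rule sum_cube_permute_list[OF \<sigma>])
  finally show ?thesis by (simp add: cond_exp_def)
qed

lemma cond_exp_prefix:
  assumes n: "n \<ge> 1" and "i \<le> l" and X: "X \<in> cube n l"
  shows "cond_exp n l {..<i} G X = delta n l G (take i X)"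
proof -
  have "(\<Sum>Z\<in>cube n l. G (merge_on {..<i} X Z)) = (\<Sum>Z\<in>cube n l. G (take i X @ drop i Z))"
    using assms by (intro sum.cong refl) (simp add: merge_on_prefix length_of_cube)
  also have "\<dots> = (\<Sum>Y\<in>cube n i. \<Sum>W\<in>cube n (l - i). G (take i X @ drop i (Y @ W)))"
    using sum_cube_add[where a=i and b="l - i" and f="\<lambda>Z. G (take i X @ drop i Z)"] assms by simp
  also have "\<dots> = real (n ^ i) * (\<Sum>W\<in>cube n (l - i). G (take i X @ W))"
    by (simp add: length_of_cube card_cube)
  moreover have "real n ^ l = real n ^ i * real n ^ (l - i)"
    using assms by (simp flip: power_add)
  ultimately show ?thesis
    using assms by (simp add: cond_exp_def delta_def length_of_cube card_cube min_def)
qed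

definition mean_sq_delta :: "nat \<Rightarrow> nat \<Rightarrow> (nat list \<Rightarrow> real) \<Rightarrow> nat \<Rightarrow> real" where
  "mean_sq_delta n l G j = (\<Sum>Y\<in>cube n j. (delta n l G Y)\<^sup>2) / real (card (cube n j))"

lemma sum_sq_cond_exp_prefix:
  assumes n: "n \<ge> 1" and "i \<le> l"
  shows "(\<Sum>X\<in>cube n l. (cond_exp n l {..<i} G X)\<^sup>2) / real (n ^ l) = mean_sq_delta n l G i"
proof -
  have "(\<Sum>X\<in>cube n l. (cond_exp n l {..<i} G X)\<^sup>2) = (\<Sum>X\<in>cube n l. (delta n l G (take i X))\<^sup>2)"
    using assms by (intro sum.cong refl) (simp add: cond_exp_prefix)
  also have "\<dots> = real (n ^ (l - i)) * (\<Sum>Y\<in>cube n i. (delta n l G Y)\<^sup>2)"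
    using assms(2) by (rule sum_cube_take)
  moreover have "real n ^ l = real n ^ i * real n ^ (l - i)"
    using assms by (simp flip: power_add)
  ultimately show ?thesis
    using n by (simp add: mean_sq_delta_def card_cube)
qed

lemma permutation_onto_prefix:
  assumes S: "S \<subseteq> {..<l}"
  obtains \<sigma> where "\<sigma> permutes {..<l}" "\<And>k. k < l \<Longrightarrow> \<sigma> k \<in> S \<longleftrightarrow> k < card S"
proof -
  define i where "i = card S"
  have "finite S" using S finite_subset by blast
  have il: "i \<le> l" using S card_mono[of "{..<l}" S] by (auto simp: i_def)
  obtain f1 where f1: "bij_betw f1 {..<i} S"
    using finite_same_card_bij[of "{..<i}" S] \<open>finite S\<close> by (auto simp: i_def)
  have "card ({..<l} - S) = card {i..<l}"
    using S \<open>finite S\<close> by (simp add: card_Diff_subset i_def)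
  then obtain f2 where f2: "bij_betw f2 {i..<l} ({..<l} - S)"
    using finite_same_card_bij[of "{i..<l}" "{..<l} - S"] by auto
  define \<sigma> where "\<sigma> k = (if k < i then f1 k else if k < l then f2 k else k)" for k
  have b1: "bij_betw \<sigma> {..<i} S"
    using f1 by (rule bij_betw_cong[THEN iffD1, rotated]) (simp add: \<sigma>_def)
  have b2: "bij_betw \<sigma> {i..<l} ({..<l} - S)"
    using f2 by (rule bij_betw_cong[THEN iffD1, rotated]) (simp add: \<sigma>_def)
  have "bij_betw \<sigma> ({..<i} \<union> {i..<l}) (S \<union> ({..<l} - S))"
    by (rule bij_betw_combine[OF b1 b2]) auto
  moreover have "{..<i} \<union> {i..<l} = {..<l}" "S \<union> ({..<l} - S) = {..<l}"
    using il S by auto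
  ultimately have "\<sigma> permutes {..<l}"
    by (intro bij_imp_permutes) (auto simp: \<sigma>_def)
  moreover have "\<sigma> k \<in> S \<longleftrightarrow> k < i" if "k < l" for k
    using bij_betw_apply[OF b1, of k] bij_betw_apply[OF b2, of k] that by (cases "k < i") auto
  ultimately show ?thesis using that by (simp add: i_def)
qed

lemma sos2_inv_sum_sq_cond_exp_permute_list:
  assumes \<sigma>: "\<sigma> permutes {..<l}"
  shows "sos2_inv n l (\<lambda>G. (\<Sum>X\<in>cube n l. (cond_exp n l S (\<lambda>W. G (permute_list \<sigma> W)) X)\<^sup>2)
                             - (\<Sum>X\<in>cube n l. (cond_exp n l S G X)\<^sup>2))"
proof -
  define a where "a X G = cond_exp n l S G X" for X G
  define b where "b X G = cond_exp n l S (\<lambda>W. G (permute_list \<sigma> W)) X" for X G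
  define defect where
    "defect X Z (G :: nat list \<Rightarrow> real) = G (merge_on S X Z) - G (permute_list \<sigma> (merge_on S X Z))"
    for X Z G
  have diff: "b X G - a X G = - (\<Sum>Z\<in>cube n l. defect X Z G) / real (n ^ l)" for X G
    unfolding a_def b_def defect_def cond_exp_def by (simp add: sum_subtractf diff_divide_distrib)
  have sq_diff: "(b X G)\<^sup>2 - (a X G)\<^sup>2
      = (\<Sum>Z\<in>cube n l. (- (a X G + b X G) / real (n ^ l)) * defect X Z G)" for X G
  proof -
    have "(b X G)\<^sup>2 - (a X G)\<^sup>2 = (a X G + b X G) * (b X G - a X G)"
      by (simp add: power2_eq_square algebra_simps)
    also have "\<dots> = (- (a X G + b X G) / real (n ^ l)) * (\<Sum>Z\<in>cube n l. defect X Z G)"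
      unfolding diff by (simp add: divide_inverse algebra_simps)
    finally show ?thesis by (simp add: sum_distrib_left)
  qed
  have "sos2_inv n l (\<lambda>G. \<Sum>X\<in>cube n l. \<Sum>Z\<in>cube n l. (- (a X G + b X G) / real (n ^ l)) * defect X Z G)"
  proof (intro sos2_inv_sum finite_cube)
    fix X Z assume X: "X \<in> cube n l" and Z: "Z \<in> cube n l"
    have "affine_form n l (b X)"
      unfolding b_def cond_exp_def using X \<sigma>
      by (intro affine_form_divide affine_form_sum affine_form_var)
         (auto intro: permute_list_in_cube merge_on_in_cube)
    then have "affine_form n l (\<lambda>G. - (a X G + b X G) / real (n ^ l))"
      unfolding a_def using X
      by (intro affine_form_divide affine_form_uminus affine_form_add affine_form_cond_exp)
    then show "sos2_inv n l (\<lambda>G. (- (a X G + b X G) / real (n ^ l)) * defect X Z G)"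
      unfolding defect_def using X Z \<sigma> by (intro sos2_inv_axiom_multiple merge_on_in_cube)
  qed
  then show ?thesis
    by (rule sos2_inv_cong) (simp only: sq_diff[symmetric] sum_subtractf, simp add: a_def b_def)
qed

lemma sos2_inv_support_bound:
  assumes n: "n \<ge> 1" and S: "S \<subseteq> {..<l}" "card S = i"
  shows "sos2_inv n l (\<lambda>G. mean_sq_delta n l G i
           - (\<Sum>T\<in>{T\<in>cube n l. nonzero_indices T = S}. (cmod (fourier n l G T))\<^sup>2))"
proof -
  obtain \<sigma> where \<sigma>: "\<sigma> permutes {..<l}" and onto: "\<And>k. k < l \<Longrightarrow> \<sigma> k \<in> S \<longleftrightarrow> k \<in> {..<i}"
    using permutation_onto_prefix[OF S(1)] S(2) by auto
  have "i \<le> l" using S card_mono[of "{..<l}" S] by auto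
  define N where "N = real (n ^ l)"
  let ?A = "\<lambda>G. \<Sum>X\<in>cube n l. (cond_exp n l S G X)\<^sup>2"
  let ?B = "\<lambda>G. \<Sum>X\<in>cube n l. (cond_exp n l S (\<lambda>W. G (permute_list \<sigma> W)) X)\<^sup>2"
  let ?weight = "\<lambda>G. \<Sum>T\<in>{T\<in>cube n l. nonzero_indices T = S}. (cmod (fourier n l G T))\<^sup>2"
  have mean: "?B G / N = mean_sq_delta n l G i" for G
  proof -
    have "?B G = (\<Sum>X\<in>cube n l. (cond_exp n l {..<i} G (permute_list \<sigma> X))\<^sup>2)"
      by (intro sum.cong refl) (simp add: cond_exp_permute_list[OF \<sigma> _ onto])
    also have "\<dots> = (\<Sum>X\<in>cube n l. (cond_exp n l {..<i} G X)\<^sup>2)"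
      by (rule sum_cube_permute_list[OF \<sigma>])
    finally show ?thesis
      using sum_sq_cond_exp_prefix[OF n \<open>i \<le> l\<close>] by (simp add: N_def)
  qed
  have split: "mean_sq_delta n l G i - ?weight G = 1 / N * (?B G - ?A G) + (?A G / N - ?weight G)" for G
    by (simp add: mean[symmetric] diff_divide_distrib)
  have "sos2_inv n l (\<lambda>G. 1 / N * (?B G - ?A G))"
    by (intro sos2_inv_mult sos2_inv_sum_sq_cond_exp_permute_list \<sigma>) (simp add: N_def)
  moreover have "sos2_inv n l (\<lambda>G. ?A G / N - ?weight G)"
    unfolding N_def by (rule sos2_inv_bessel_gap[OF n]) auto
  ultimately have "sos2_inv n l (\<lambda>G. 1 / N * (?B G - ?A G) + (?A G / N - ?weight G))"
    by (rule sos2_inv_add)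
  then show ?thesis by (rule sos2_inv_cong) (rule split)
qed

lemma eta_eq_sum_supports:
  "eta n l G i = (\<Sum>S\<in>{S. S \<subseteq> {..<l} \<and> card S = i}.
                    \<Sum>T\<in>{T\<in>cube n l. nonzero_indices T = S}. (cmod (fourier n l G T))\<^sup>2)"
proof -
  have wt: "wt T = card (nonzero_indices T)" for T
    by (simp add: wt_def nonzero_indices_def)
  have "finite {S. S \<subseteq> {..<l} \<and> card S = i}"
    by (rule finite_subset[of _ "Pow {..<l}"]) auto
  moreover have "nonzero_indices ` {T\<in>cube n l. wt T = i} \<subseteq> {S. S \<subseteq> {..<l} \<and> card S = i}"
    by (auto simp: wt nonzero_indices_def cube_def)
  ultimately show ?thesis
    unfolding eta_def by (subst sum.group[symmetric]) (auto simp: wt intro!: sum.cong)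
qed

lemma affine_form_delta:
  assumes "Y \<in> cube n j" "j \<le> l"
  shows "affine_form n l (\<lambda>G. delta n l G Y)"
proof -
  have "Y @ Z \<in> cube n l" if "Z \<in> cube n (l - length Y)" for Z
    using assms that by (auto simp: cube_def)
  then show ?thesis
    unfolding delta_def by (intro affine_form_divide affine_form_sum affine_form_var) auto
qed

lemma sos2_inv_mean_sq_delta: "j \<le> l \<Longrightarrow> sos2_inv n l (\<lambda>G. mean_sq_delta n l G j)"
  unfolding mean_sq_delta_def divide_inverse mult.commute[of _ "inverse _"]
  by (intro sos2_inv_mult sos2_inv_sum sos2_inv_square affine_form_delta) auto

lemma sos2_inv_rhsC7_slack:
  assumes "i \<le> l"
  shows "sos2_inv n l (\<lambda>G. rhsC7 n l G i - real (l choose i) * mean_sq_delta n l G i)"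
proof -
  define w where "w j = real (l choose i) * (2 ^ i * real (i choose j) - of_bool (j = i))" for j
  have w_nonneg: "w j \<ge> 0" if "j \<in> {0..i}" for j
  proof -
    have "1 \<le> real (i choose j)" "(1::real) \<le> 2 ^ i" using that by (auto simp: Suc_leI)
    then have "1 \<le> (2::real) ^ i * real (i choose j)" by (metis mult_mono mult_1 zero_le_one order_trans)
    then show ?thesis by (simp add: w_def)
  qed
  have slack: "rhsC7 n l G i - real (l choose i) * mean_sq_delta n l G i
      = (\<Sum>j\<in>{0..i}. w j * mean_sq_delta n l G j)" for G
  proof -
    have "rhsC7 n l G i = (\<Sum>j\<in>{0..i}. real (l choose i) * 2 ^ i * real (i choose j) * mean_sq_delta n l G j)"
      unfolding rhsC7_def mean_sq_delta_def[symmetric] by (simp add: sum_distrib_left mult_ac)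
    moreover have "(\<Sum>j\<in>{0..i}. of_bool (j = i) * (real (l choose i) * mean_sq_delta n l G j))
        = real (l choose i) * mean_sq_delta n l G i"
      by (subst sum.cong[OF refl, where h="\<lambda>j. if j = i then real (l choose i) * mean_sq_delta n l G i else 0"])
         auto
    ultimately show ?thesis
      by (simp add: w_def algebra_simps sum_subtractf)
  qed
  have "sos2_inv n l (\<lambda>G. \<Sum>j\<in>{0..i}. w j * mean_sq_delta n l G j)"
    using assms w_nonneg by (intro sos2_inv_sum sos2_inv_mult sos2_inv_mean_sq_delta) auto
  then show ?thesis by (rule sos2_inv_cong) (rule slack)
qed

lemma sos2_inv_rhsC7_minus_eta:
  assumes n: "n \<ge> 1" and "i \<le> l"
  shows "sos2_inv n l (\<lambda>G. rhsC7 n l G i - eta n l G i)"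
proof -
  let ?supports = "{S. S \<subseteq> {..<l} \<and> card S = i}"
  let ?weight = "\<lambda>G S. \<Sum>T\<in>{T\<in>cube n l. nonzero_indices T = S}. (cmod (fourier n l G T))\<^sup>2"
  have "finite ?supports"
    by (rule finite_subset[of _ "Pow {..<l}"]) auto
  have "card ?supports = l choose i"
    using n_subsets[of "{..<l}" i] by simp
  then have split: "rhsC7 n l G i - eta n l G i
      = (rhsC7 n l G i - real (l choose i) * mean_sq_delta n l G i)
        + (\<Sum>S\<in>?supports. mean_sq_delta n l G i - ?weight G S)" for G
    by (simp add: eta_eq_sum_supports sum_subtractf)
  have "sos2_inv n l (\<lambda>G. (rhsC7 n l G i - real (l choose i) * mean_sq_delta n l G i)
        + (\<Sum>S\<in>?supports. mean_sq_delta n l G i - ?weight G S))"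
    using assms \<open>finite ?supports\<close>
    by (intro sos2_inv_add sos2_inv_rhsC7_slack sos2_inv_sum sos2_inv_support_bound) auto
  then show ?thesis by (rule sos2_inv_cong) (rule split)
qed

theorem lemmaC7:
  fixes n l i :: nat and F :: "nat list \<Rightarrow> real"
  assumes "n \<ge> 1" and "perm_invariant n l F" and "i \<le> l"
  shows "eta n l F i \<le> rhsC7 n l F i
         \<and> sos2_inv n l (\<lambda>G. rhsC7 n l G i - eta n l G i)"
proof
  show sos: "sos2_inv n l (\<lambda>G. rhsC7 n l G i - eta n l G i)"
    using assms(1,3) by (rule sos2_inv_rhsC7_minus_eta)
  show "eta n l F i \<le> rhsC7 n l F i"
    using sos2_inv_nonneg[OF sos assms(2)] by simp
qed

end
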